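(* Let $N\ge 1$ and $m\ge 1$ be integers, let $\Delta\ge 1$ and $K\ge 1$ be reals, and suppose $2^m\le N/(K\Delta)$. Then there is a set $\mathcal{Y}\subseteq(\{0,1\}^m)^N$ whose entropy deficiency is at most $\Delta$ and whose min-entropy rate is at least $1-1/m$, such that for every $I\subseteq[N]$ with $|I|\le (K-1)\Delta$, the set $\mathrm{IND}_m^{[N]\setminus I}([m]^N,\mathcal{Y})$ does not contain the all-$0$ string.
   Context: The Index function $\mathrm{IND}_m:[m]\times\{0,1\}^m\to\{0,1\}$ is $\mathrm{IND}_m(x,y)=y_x$. For $\mathcal{A}\subseteq[m]^N$, $\mathcal{B}\subseteq(\{0,1\}^m)^N$ and $J\subseteq[N]$, $\mathrm{IND}_m^J(\mathcal{A},\mathcal{B})\subseteq\{0,1\}^J$ denotes the set of all vectors $(\mathrm{IND}_m(x_i,y_i))_{i\in J}$ with $x\in\mathcal{A}$, $y\in\mathcal{B}$. A set $\mathcal{S}\subseteq U^N$ is identified with the uniform distribution on it. The entropy deficiency of a distribution $\mathcal{D}$ on a finite universe $V$ is $\log_2|V|-H(\mathcal{D})$, where $H$ is Shannon entropy; for a set $\mathcal{Y}\subseteq(\{0,1\}^m)^N$ this is $mN-\log_2|\mathcal{Y}|$. The min-entropy rate of a distribution $\mathcal{D}$ on $U^N$ is the largest $\tau$ such that for every $J\subseteq[N]$ and every $\alpha_J\in U^J$, $\Pr_{x\sim\mathcal{D}}[x_J=\alpha_J]\le |U|^{-\tau|J|}$ (here $U=\{0,1\}^m$, $|U|=2^m$).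 *)

theory Defs
  imports Complex_Main
begin

text \<open>Conventions (0-based indices):
  [N] = {0..<N}, [m] = {0..<m}.
  An element of {0,1}^m is a function v :: nat => bool with v j = False for j >= m.
  An element of U^N (U = {0,1}^m) is y :: nat => nat => bool with y i in U for i < N
  and y i = (\<lambda>_. False) for i >= N.
  An element of [m]^N is x :: nat => nat with x i < m for i < N and x i = 0 for i >= N.
  A vector in {0,1}^J is a function nat => bool that is False outside J.\<close>

definition bits :: "nat \<Rightarrow> (nat \<Rightarrow> bool) set" where
  "bits m = {v. \<forall>j. m \<le> j \<longrightarrow> \<not> v j}"

definition block_vecs :: "nat \<Rightarrow> nat \<Rightarrow> (nat \<Rightarrow> nat \<Rightarrow> bool) set" where
  "block_vecs m N = {y. (\<forall>i<N. y i \<in> bits m) \<and> (\<forall>i. N \<le> i \<longrightarrow> y i = (\<lambda>_. False))}"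

definition index_vecs :: "nat \<Rightarrow> nat \<Rightarrow> (nat \<Rightarrow> nat) set" where
  "index_vecs m N = {x. (\<forall>i<N. x i < m) \<and> (\<forall>i. N \<le> i \<longrightarrow> x i = 0)}"

definition IND :: "nat \<Rightarrow> (nat \<Rightarrow> bool) \<Rightarrow> bool" where
  "IND x y = y x"

definition IND_set :: "nat set \<Rightarrow> (nat \<Rightarrow> nat) set \<Rightarrow> (nat \<Rightarrow> nat \<Rightarrow> bool) set \<Rightarrow> (nat \<Rightarrow> bool) set" where
  "IND_set J A B = {(\<lambda>i. if i \<in> J then IND (x i) (y i) else False) | x y. x \<in> A \<and> y \<in> B}"

text \<open>Entropy deficiency of (the uniform distribution on) a set Y of (\{0,1\}^m)^N.\<close>
definition entropy_deficiency :: "nat \<Rightarrow> nat \<Rightarrow> (nat \<Rightarrow> nat \<Rightarrow> bool) set \<Rightarrow> real" where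
  "entropy_deficiency m N Y = real m * real N - log 2 (real (card Y))"

text \<open>tau is an admissible min-entropy rate of the uniform distribution on Y:
  for all J \<subseteq> [N] and all alpha in U^J, Pr[y_J = alpha] \<le> |U|^(-tau |J|).\<close>
definition min_entropy_rate_at_least :: "nat \<Rightarrow> nat \<Rightarrow> (nat \<Rightarrow> nat \<Rightarrow> bool) set \<Rightarrow> real \<Rightarrow> bool" where
  "min_entropy_rate_at_least m N Y \<tau> \<longleftrightarrow>
     (\<forall>J \<subseteq> {..<N}. \<forall>\<alpha>. (\<forall>i\<in>J. \<alpha> i \<in> bits m) \<longrightarrow>
        real (card {y \<in> Y. \<forall>i\<in>J. y i = \<alpha> i}) / real (card Y)
          \<le> (2 ^ m) powr (- \<tau> * real (card J)))"

end

theory Submission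
  imports Defs "HOL-Library.FuncSet"
begin

text \<open>Take for \<open>Y\<close> the strings with at least \<open>k = \<lfloor>(K - 1) \<Delta>\<rfloor> + 1\<close> all-ones blocks.
  On an all-ones block \<open>IND\<close> is \<open>1\<close> whatever the index, so deleting fewer than \<open>k\<close>
  coordinates never leaves the all-zero string. The number of all-ones blocks of a uniform
  string is binomial with parameters \<open>N\<close> and \<open>2^(-m)\<close>, whose mean is at least \<open>k\<close>;
  as a binomial variable with success probability at most \<open>1/2\<close> is at least any integer
  not exceeding its mean with probability at least \<open>1/2\<close>, \<open>Y\<close> contains half of all strings. This gives deficiency at most \<open>1\<close>, and
  fixing \<open>s \<ge> 1\<close> blocks leaves a fraction at most \<open>2 \<cdot> 2^(-m s) \<le> 2^(-(m - 1) s)\<close> of \<open>Y\<close>.\<close>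

text \<open>\<open>binomial_weight n r a\<close> is \<open>(r + 1)^n\<close> times the probability that a
  binomial variable with parameters \<open>n\<close> and \<open>1 / (r + 1)\<close> takes the value \<open>a\<close>.\<close>

definition binomial_weight :: "nat \<Rightarrow> real \<Rightarrow> nat \<Rightarrow> real" where
  "binomial_weight n r a = real (n choose a) * r ^ (n - a)"

lemma binomial_weight_nonneg: "r \<ge> 0 \<Longrightarrow> binomial_weight n r a \<ge> 0"
  unfolding binomial_weight_def by simp

lemma sum_binomial_weight: "(\<Sum>a\<le>n. binomial_weight n r a) = (r + 1) ^ n"
  using binomial_ring[of 1 r n] unfolding binomial_weight_def by (simp add: add.commute)

lemma binomial_weight_Suc:
  assumes "a < n"
  shows "binomial_weight n r (Suc a) * real (Suc a) * r = binomial_weight n r a * real (n - a)"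
proof -
  have "real (n choose Suc a) * real (Suc a) = real (n choose a) * real (n - a)"
    using binomial_absorption[of a n] binomial_absorb_comp[of n a]
    by (metis mult.commute of_nat_mult)
  moreover have "r ^ (n - a) = r ^ (n - Suc a) * r"
    using assms by (simp flip: power_Suc2 add: Suc_diff_Suc)
  ultimately show ?thesis
    unfolding binomial_weight_def by (metis (no_types, opaque_lifting) mult.assoc mult.commute)
qed

lemma binomial_weight_le_Suc:
  assumes "r > 0" and "a < n" and "real (Suc a) * r \<le> real (n - a)"
  shows "binomial_weight n r a \<le> binomial_weight n r (Suc a)"
proof -
  have "binomial_weight n r a * (real (Suc a) * r) \<le> binomial_weight n r a * real (n - a)"
    using assms by (intro mult_left_mono binomial_weight_nonneg) auto
  also have "\<dots> = binomial_weight n r (Suc a) * (real (Suc a) * r)"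
    using binomial_weight_Suc[OF assms(2)] by (simp add: mult.assoc)
  finally show ?thesis
    using assms(1) by (simp add: mult_le_cancel_right)
qed

lemma diff_squares_scaled_le:
  fixes k r M s :: real
  assumes "r \<ge> 1" and "0 \<le> k" and "k * r \<le> M"
  shows "(k\<^sup>2 - s\<^sup>2) * r\<^sup>2 \<le> M\<^sup>2 - s\<^sup>2"
proof -
  have "s\<^sup>2 \<le> s\<^sup>2 * r\<^sup>2"
    using assms(1) by (simp add: mult_le_cancel_left1 one_le_power)
  moreover have "(k * r)\<^sup>2 \<le> M\<^sup>2"
    using assms by (intro power_mono) auto
  ultimately show ?thesis
    by (simp add: algebra_simps power_mult_distrib)
qed

lemma double_le_if_mult_Suc_le:
  fixes r :: real
  assumes "r \<ge> 1" and "real k * (r + 1) \<le> real n"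
  shows "2 * k \<le> n"
proof -
  have "real k * 2 \<le> real k * (r + 1)"
    using assms(1) by (intro mult_left_mono) auto
  then show ?thesis
    using assms(2) by linarith
qed

text \<open>Moving the pair \<open>(a + 1, b) = (k - 1 - i, k + i)\<close> outwards to \<open>(a, b + 1)\<close> multiplies
  the two weights by \<open>(a + 1) r / (n - a)\<close> and \<open>(n - b) / ((b + 1) r)\<close>; the first factor
  is the smaller one since \<open>(a + 1) (b + 1) = k\<^sup>2 - (i + 1)\<^sup>2\<close> and
  \<open>(n - a) (n - b) = (n - k + 1)\<^sup>2 - (i + 1)\<^sup>2\<close>.\<close>

lemma binomial_weight_pair_step:
  assumes r: "r \<ge> 1" and kn: "real k * (r + 1) \<le> real n" and "Suc i < k"
    and IH: "binomial_weight n r (k - 1 - i) \<le> binomial_weight n r (k + i)"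
  shows "binomial_weight n r (k - 1 - Suc i) \<le> binomial_weight n r (k + Suc i)"
proof -
  define c where "c = binomial_weight n r"
  define a where "a = k - 2 - i"
  define b where "b = k + i"
  have ik: "i + 2 \<le> k" and k2n: "2 * k \<le> n"
    using \<open>Suc i < k\<close> double_le_if_mult_Suc_le[OF r kn] by simp_all
  have IH': "c (Suc a) \<le> c b"
    using IH ik unfolding a_def b_def c_def by (simp add: Suc_diff_Suc numeral_2_eq_2)
  have "(real k ^ 2 - (real i + 1) ^ 2) * r ^ 2 \<le> (real n - real k + 1) ^ 2 - (real i + 1) ^ 2"
    using kn r by (intro diff_squares_scaled_le) (auto simp: algebra_simps)
  moreover have "real (Suc a) * real (Suc b) = real k ^ 2 - (real i + 1) ^ 2"
    using ik unfolding a_def b_def by (simp add: of_nat_diff algebra_simps power2_eq_square)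
  moreover have "real (n - a) * real (n - b) = (real n - real k + 1) ^ 2 - (real i + 1) ^ 2"
    using ik k2n unfolding a_def b_def by (simp add: of_nat_diff algebra_simps power2_eq_square)
  ultimately have key: "real (Suc a) * real (Suc b) * r ^ 2 \<le> real (n - a) * real (n - b)"
    by simp
  have "c a * real (n - a) * (real (Suc b) * r) = c (Suc a) * real (Suc a) * r * (real (Suc b) * r)"
    using binomial_weight_Suc[of a n r] ik k2n unfolding a_def c_def by simp
  also have "\<dots> \<le> c b * real (Suc a) * r * (real (Suc b) * r)"
    using IH' r by (intro mult_right_mono) auto
  also have "\<dots> = c b * (real (Suc a) * real (Suc b) * r ^ 2)"
    by (simp add: algebra_simps power2_eq_square)
  also have "\<dots> \<le> c b * (real (n - a) * real (n - b))"
    using key r unfolding c_def by (intro mult_left_mono binomial_weight_nonneg) auto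
  also have "\<dots> = c (Suc b) * real (Suc b) * r * real (n - a)"
    using binomial_weight_Suc[of b n r] ik k2n unfolding b_def c_def by (simp add: ac_simps)
  finally have "c a * (real (n - a) * (real (Suc b) * r)) \<le> c (Suc b) * (real (n - a) * (real (Suc b) * r))"
    by (simp add: ac_simps)
  moreover have "0 < real (n - a) * (real (Suc b) * r)"
    using ik k2n r unfolding a_def by simp
  ultimately have "c a \<le> c (Suc b)"
    by (rule mult_right_le_imp_le)
  moreover have "k - 1 - Suc i = a" and "k + Suc i = Suc b"
    unfolding a_def b_def by simp_all
  ultimately show ?thesis
    unfolding c_def by simp
qed

lemma binomial_weight_pairs_mono:
  assumes r: "r \<ge> 1" and kn: "real k * (r + 1) \<le> real n" and "i < k"
  shows "binomial_weight n r (k - 1 - i) \<le> binomial_weight n r (k + i)"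
  using \<open>i < k\<close>
proof (induction i)
  case 0
  have "real k * r \<le> real (n - (k - 1))"
    using kn double_le_if_mult_Suc_le[OF r kn] by (simp add: of_nat_diff algebra_simps)
  then show ?case
    using 0 r double_le_if_mult_Suc_le[OF r kn] binomial_weight_le_Suc[of r "k - 1" n] by simp
next
  case (Suc i)
  then show ?case
    using binomial_weight_pair_step[OF r kn] by simp
qed

text \<open>The reflection \<open>a \<mapsto> 2 k - 1 - a\<close> maps the lower tail into the upper tail without
  decreasing weights.\<close>

lemma binomial_lower_tail_le_upper_tail:
  assumes r: "r \<ge> 1" and kn: "real k * (r + 1) \<le> real n"
  shows "(\<Sum>a<k. binomial_weight n r a) \<le> (\<Sum>a\<in>{k..n}. binomial_weight n r a)"
proof -
  have "(\<Sum>a<k. binomial_weight n r a) = (\<Sum>i<k. binomial_weight n r (k - Suc i))"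
    by (rule sum.nat_diff_reindex[symmetric])
  also have "\<dots> \<le> (\<Sum>i<k. binomial_weight n r (k + i))"
    using binomial_weight_pairs_mono[OF r kn] by (intro sum_mono) simp
  also have "\<dots> = (\<Sum>a\<in>{k..<k + k}. binomial_weight n r a)"
    using sum.shift_bounds_nat_ivl[of "binomial_weight n r" 0 k k]
    by (simp add: atLeast0LessThan add.commute)
  also have "\<dots> \<le> (\<Sum>a\<in>{k..n}. binomial_weight n r a)"
    using double_le_if_mult_Suc_le[OF r kn] r by (intro sum_mono2 binomial_weight_nonneg) auto
  finally show ?thesis .
qed

lemma binomial_upper_tail_ge_half:
  assumes "r \<ge> 1" and "real k * (r + 1) \<le> real n"
  shows "(r + 1) ^ n \<le> 2 * (\<Sum>a\<in>{k..n}. binomial_weight n r a)"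
proof -
  have "k \<le> n"
    using double_le_if_mult_Suc_le[OF assms] by simp
  then have "{..n} = {..<k} \<union> {k..n}"
    by auto
  then have "(r + 1) ^ n = (\<Sum>a<k. binomial_weight n r a) + (\<Sum>a\<in>{k..n}. binomial_weight n r a)"
    unfolding sum_binomial_weight[symmetric]
    by (metis finite_atLeastAtMost finite_lessThan ivl_disj_int_one(4) sum.union_disjoint)
  then show ?thesis
    using binomial_lower_tail_le_upper_tail[OF assms] by simp
qed

text \<open>Like \<open>Pi\<^sub>E\<close>, but with the value \<open>d\<close> instead of \<open>undefined\<close> outside \<open>I\<close>:
  this is how \<open>bits\<close> and \<open>block_vecs\<close> encode vectors.\<close>

definition Pi_default :: "'i set \<Rightarrow> ('i \<Rightarrow> 'a set) \<Rightarrow> 'a \<Rightarrow> ('i \<Rightarrow> 'a) set" where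
  "Pi_default I B d = {f. (\<forall>i\<in>I. f i \<in> B i) \<and> (\<forall>i. i \<notin> I \<longrightarrow> f i = d)}"

lemma bij_betw_restrict_Pi_default: "bij_betw (\<lambda>f. restrict f I) (Pi_default I B d) (Pi\<^sub>E I B)"
proof (rule bij_betw_imageI)
  show "inj_on (\<lambda>f. restrict f I) (Pi_default I B d)"
  proof (rule inj_onI, rule ext)
    fix f g i
    assume "f \<in> Pi_default I B d" "g \<in> Pi_default I B d" "restrict f I = restrict g I"
    then show "f i = g i"
      unfolding Pi_default_def by (cases "i \<in> I") (auto dest: fun_cong[where x = i])
  qed
  show "(\<lambda>f. restrict f I) ` Pi_default I B d = Pi\<^sub>E I B"
  proof (intro equalityI subsetI)
    fix g assume g: "g \<in> Pi\<^sub>E I B"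
    have "(\<lambda>i. if i \<in> I then g i else d) \<in> Pi_default I B d"
      using g unfolding Pi_default_def by auto
    moreover have "restrict (\<lambda>i. if i \<in> I then g i else d) I = restrict g I"
      by (simp add: restrict_def fun_eq_iff)
    then have "g = restrict (\<lambda>i. if i \<in> I then g i else d) I"
      using g by simp
    ultimately show "g \<in> (\<lambda>f. restrict f I) ` Pi_default I B d"
      by blast
  qed (auto simp: Pi_default_def)
qed

lemma card_Pi_default: "finite I \<Longrightarrow> card (Pi_default I B d) = (\<Prod>i\<in>I. card (B i))"
  unfolding bij_betw_same_card[OF bij_betw_restrict_Pi_default] by (rule card_PiE)

lemma finite_Pi_default: "finite I \<Longrightarrow> (\<And>i. i \<in> I \<Longrightarrow> finite (B i)) \<Longrightarrow> finite (Pi_default I B d)"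
  unfolding bij_betw_finite[OF bij_betw_restrict_Pi_default] by (rule finite_PiE)

lemma card_Pi_default_fixing:
  assumes "finite I" and "J \<subseteq> I"
  shows "card (Pi_default I (\<lambda>i. if i \<in> J then {\<alpha> i} else C) d) = card C ^ (card I - card J)"
proof -
  have "card (Pi_default I (\<lambda>i. if i \<in> J then {\<alpha> i} else C) d)
      = (\<Prod>i\<in>I. if i \<in> J then 1 else card C)"
    unfolding card_Pi_default[OF assms(1)] by (rule prod.cong) auto
  also have "\<dots> = (\<Prod>i\<in>I - J. card C)"
    using assms by (simp add: prod.If_cases Int_absorb1 Diff_eq)
  also have "\<dots> = card C ^ (card I - card J)"
    using assms by (simp add: card_Diff_subset finite_subset)
  finally show ?thesis .
qed

lemma bits_eq_Pi_default: "bits m = Pi_default {..<m} (\<lambda>_. UNIV) False"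
  unfolding bits_def Pi_default_def by auto

lemma finite_bits: "finite (bits m)"
  unfolding bits_eq_Pi_default by (rule finite_Pi_default) auto

lemma card_bits: "card (bits m) = 2 ^ m"
  unfolding bits_eq_Pi_default by (simp add: card_Pi_default)

lemma block_vecs_eq_Pi_default: "block_vecs m N = Pi_default {..<N} (\<lambda>_. bits m) (\<lambda>_. False)"
  unfolding block_vecs_def Pi_default_def by auto

lemma finite_block_vecs: "finite (block_vecs m N)"
  unfolding block_vecs_eq_Pi_default by (rule finite_Pi_default) (auto simp: finite_bits)

lemma card_block_vecs_fixing:
  assumes "J \<subseteq> {..<N}" and "\<forall>i\<in>J. \<alpha> i \<in> bits m"
  shows "card {y \<in> block_vecs m N. \<forall>i\<in>J. y i = \<alpha> i} = 2 ^ (m * (N - card J))"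
proof -
  have "{y \<in> block_vecs m N. \<forall>i\<in>J. y i = \<alpha> i}
      = Pi_default {..<N} (\<lambda>i. if i \<in> J then {\<alpha> i} else bits m) (\<lambda>_. False)"
    using assms unfolding block_vecs_def Pi_default_def by auto
  then show ?thesis
    using assms(1) by (simp add: card_Pi_default_fixing card_bits power_mult)
qed

definition all_ones :: "nat \<Rightarrow> nat \<Rightarrow> bool" where
  "all_ones m j \<longleftrightarrow> j < m"

definition all_ones_blocks :: "nat \<Rightarrow> nat \<Rightarrow> (nat \<Rightarrow> nat \<Rightarrow> bool) \<Rightarrow> nat set" where
  "all_ones_blocks m N y = {i. i < N \<and> y i = all_ones m}"

lemma all_ones_in_bits: "all_ones m \<in> bits m"
  unfolding all_ones_def bits_def by simp

lemma card_all_ones_blocks_le: "card (all_ones_blocks m N y) \<le> N"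
  using card_mono[of "{..<N}" "all_ones_blocks m N y"] unfolding all_ones_blocks_def by auto

lemma card_block_vecs_all_ones_blocks_eq:
  assumes "S \<subseteq> {..<N}"
  shows "card {y \<in> block_vecs m N. all_ones_blocks m N y = S} = (2 ^ m - 1) ^ (N - card S)"
proof -
  have "{y \<in> block_vecs m N. all_ones_blocks m N y = S}
      = Pi_default {..<N} (\<lambda>i. if i \<in> S then {all_ones m} else bits m - {all_ones m}) (\<lambda>_. False)"
    using assms all_ones_in_bits[of m]
    unfolding block_vecs_def Pi_default_def all_ones_blocks_def by (auto split: if_splits)
  then show ?thesis
    using assms by (simp add: card_Pi_default_fixing card_bits finite_bits all_ones_in_bits)
qed

lemma card_block_vecs_card_all_ones_blocks_eq:
  "card {y \<in> block_vecs m N. card (all_ones_blocks m N y) = a} = (N choose a) * (2 ^ m - 1) ^ (N - a)"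
proof -
  define P where "P S = {y \<in> block_vecs m N. all_ones_blocks m N y = S}" for S
  define \<S> where "\<S> = {S. S \<subseteq> {..<N} \<and> card S = a}"
  have "{y \<in> block_vecs m N. card (all_ones_blocks m N y) = a} = (\<Union>S\<in>\<S>. P S)"
    unfolding P_def \<S>_def all_ones_blocks_def by auto
  moreover have "card (\<Union>S\<in>\<S>. P S) = (\<Sum>S\<in>\<S>. card (P S))"
    by (rule card_UN_disjoint) (auto simp: \<S>_def P_def finite_block_vecs)
  moreover have "(\<Sum>S\<in>\<S>. card (P S)) = (\<Sum>S\<in>\<S>. (2 ^ m - 1) ^ (N - a))"
    by (rule sum.cong) (auto simp: P_def \<S>_def card_block_vecs_all_ones_blocks_eq)
  ultimately show ?thesis
    using n_subsets[of "{..<N}" a] unfolding \<S>_def by simp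
qed

lemma card_block_vecs_many_all_ones_blocks:
  "card {y \<in> block_vecs m N. k \<le> card (all_ones_blocks m N y)}
     = (\<Sum>a\<in>{k..N}. (N choose a) * (2 ^ m - 1) ^ (N - a))"
proof -
  define E where "E a = {y \<in> block_vecs m N. card (all_ones_blocks m N y) = a}" for a
  have "{y \<in> block_vecs m N. k \<le> card (all_ones_blocks m N y)} = (\<Union>a\<in>{k..N}. E a)"
    unfolding E_def using card_all_ones_blocks_le by auto
  moreover have "card (\<Union>a\<in>{k..N}. E a) = (\<Sum>a\<in>{k..N}. card (E a))"
    by (rule card_UN_disjoint) (auto simp: E_def finite_block_vecs)
  ultimately show ?thesis
    unfolding E_def card_block_vecs_card_all_ones_blocks_eq by simp
qed

lemma card_many_all_ones_blocks_ge_half: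
  assumes "m \<ge> 1" and "k * 2 ^ m \<le> N"
  shows "2 ^ (m * N) \<le> 2 * card {y \<in> block_vecs m N. k \<le> card (all_ones_blocks m N y)}"
proof -
  define r :: real where "r = 2 ^ m - 1"
  have "(2::real) ^ 1 \<le> 2 ^ m"
    using assms(1) by (intro power_increasing) auto
  then have r: "r \<ge> 1"
    unfolding r_def by simp
  have "real (k * 2 ^ m) \<le> real N"
    using assms(2) by (simp only: of_nat_le_iff)
  then have "real k * (r + 1) \<le> real N"
    unfolding r_def by simp
  then have "(r + 1) ^ N \<le> 2 * (\<Sum>a\<in>{k..N}. binomial_weight N r a)"
    by (rule binomial_upper_tail_ge_half[OF r])
  also have "\<dots> = 2 * real (card {y \<in> block_vecs m N. k \<le> card (all_ones_blocks m N y)})"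
    unfolding card_block_vecs_many_all_ones_blocks binomial_weight_def r_def by (simp add: of_nat_diff)
  finally have "real (2 ^ (m * N)) \<le> real (2 * card {y \<in> block_vecs m N. k \<le> card (all_ones_blocks m N y)})"
    unfolding r_def by (simp add: power_mult)
  then show ?thesis
    by (simp only: of_nat_le_iff)
qed

lemma entropy_deficiency_le_1:
  assumes "2 ^ (m * N) \<le> 2 * card Y"
  shows "entropy_deficiency m N Y \<le> 1"
proof -
  have "(2::real) powr real (m * N) = 2 ^ (m * N)"
    by (rule powr_realpow) simp
  then have "2 powr (real (m * N) - 1) = 2 ^ (m * N) / 2"
    by (simp add: powr_diff)
  also have "\<dots> \<le> real (card Y)"
    using assms[folded of_nat_le_iff[where 'a = real]] by simp
  finally have bound: "2 powr (real (m * N) - 1) \<le> real (card Y)" .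
  moreover have "0 < real (card Y)"
    using bound by (rule less_le_trans[rotated]) simp
  ultimately have "real (m * N) - 1 \<le> log 2 (real (card Y))"
    by (simp add: le_log_iff)
  then show ?thesis
    unfolding entropy_deficiency_def by simp
qed

lemma min_entropy_rate_at_least_if_half_dense:
  assumes "m \<ge> 1" and Y: "Y \<subseteq> block_vecs m N" and dense: "2 ^ (m * N) \<le> 2 * card Y"
  shows "min_entropy_rate_at_least m N Y (1 - 1 / real m)"
  unfolding min_entropy_rate_at_least_def
proof (intro allI impI)
  fix J \<alpha> assume J: "J \<subseteq> {..<N}" and \<alpha>: "\<forall>i\<in>J. \<alpha> i \<in> bits m"
  define s where "s = card J"
  define hits where "hits = card {y \<in> Y. \<forall>i\<in>J. y i = \<alpha> i}"
  have "s \<le> N"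
    unfolding s_def using J by (metis card_lessThan card_mono finite_lessThan)
  have "finite Y"
    using Y finite_block_vecs by (rule finite_subset)
  have "0 < card Y"
    using dense by (cases "card Y") simp_all
  have "hits \<le> card {y \<in> block_vecs m N. \<forall>i\<in>J. y i = \<alpha> i}"
    unfolding hits_def using Y finite_block_vecs by (intro card_mono) auto
  then have "hits * 2 ^ (m * s) \<le> 2 ^ (m * (N - s)) * 2 ^ (m * s)"
    unfolding card_block_vecs_fixing[OF J \<alpha>] s_def by simp
  also have "\<dots> = 2 ^ (m * N)"
    using \<open>s \<le> N\<close> by (simp flip: power_add add_mult_distrib2)
  finally have "real (hits * 2 ^ (m * s)) \<le> real (2 * card Y)"
    using dense by (simp only: of_nat_le_iff)
  then have "real hits / real (card Y) \<le> 2 / 2 ^ (m * s)"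
    using \<open>0 < card Y\<close> by (simp add: divide_simps)
  have rate: "(2 ^ m) powr (- (1 - 1 / real m) * real s) = 2 ^ s / 2 ^ (m * s)"
  proof -
    have "real m * (- (1 - 1 / real m) * real s) = real s - real (m * s)"
      using assms(1) by (simp add: field_simps)
    then show ?thesis
      by (simp add: powr_realpow[symmetric] powr_powr powr_diff)
  qed
  show "real hits / real (card Y) \<le> (2 ^ m) powr (- (1 - 1 / real m) * real (card J))"
  proof (cases "s = 0")
    case True
    have "hits \<le> card Y"
      unfolding hits_def using \<open>finite Y\<close> by (intro card_mono) auto
    then show ?thesis
      using True \<open>0 < card Y\<close> unfolding s_def[symmetric] rate by simp
  next
    case False
    have "(2::real) ^ 1 \<le> 2 ^ s"
      using False by (intro power_increasing) auto
    then have "2 / 2 ^ (m * s) \<le> (2::real) ^ s / 2 ^ (m * s)"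
      by (simp add: divide_right_mono)
    with \<open>real hits / real (card Y) \<le> 2 / 2 ^ (m * s)\<close> show ?thesis
      unfolding s_def[symmetric] rate by linarith
  qed
qed

lemma all_zero_notin_IND_set:
  assumes "\<forall>y\<in>Y. k \<le> card (all_ones_blocks m N y)" and "finite I" and "card I < k"
  shows "(\<lambda>_. False) \<notin> IND_set ({..<N} - I) (index_vecs m N) Y"
proof
  assume "(\<lambda>_. False) \<in> IND_set ({..<N} - I) (index_vecs m N) Y"
  then obtain x y where x: "x \<in> index_vecs m N" and y: "y \<in> Y"
    and zero: "\<And>i. \<not> (if i \<in> {..<N} - I then IND (x i) (y i) else False)"
    unfolding IND_set_def by (auto dest: fun_cong)
  have "\<not> all_ones_blocks m N y \<subseteq> I"
    using assms y card_mono[of I "all_ones_blocks m N y"] by auto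
  then obtain i where "i < N" "y i = all_ones m" "i \<notin> I"
    unfolding all_ones_blocks_def by auto
  moreover have "x i < m"
    using x \<open>i < N\<close> unfolding index_vecs_def by simp
  ultimately show False
    using zero[of i] unfolding IND_def all_ones_def by simp
qed

lemma nat_mult_le_if_le_divide:
  fixes c :: real
  assumes "real a \<le> c" and "real b \<le> real n / c" and "0 < c"
  shows "a * b \<le> n"
proof -
  have "real a * real b \<le> c * (real n / c)"
    using assms by (intro mult_mono) auto
  then show ?thesis
    using assms(3) by (simp flip: of_nat_mult)
qed

theorem theorem2:
  fixes N m :: nat and \<Delta> K :: real
  assumes "N \<ge> 1" and "m \<ge> 1" and "\<Delta> \<ge> 1" and "K \<ge> 1"
    and "2 ^ m \<le> real N / (K * \<Delta>)"
  shows "\<exists>Y. Y \<subseteq> block_vecs m N \<and> Y \<noteq> {} \<and>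
           entropy_deficiency m N Y \<le> \<Delta> \<and>
           min_entropy_rate_at_least m N Y (1 - 1 / real m) \<and>
           (\<forall>I \<subseteq> {..<N}. real (card I) \<le> (K - 1) * \<Delta> \<longrightarrow>
              (\<lambda>_. False) \<notin> IND_set ({..<N} - I) (index_vecs m N) Y)"
proof -
  define k where "k = nat \<lfloor>(K - 1) * \<Delta>\<rfloor> + 1"
  define Y where "Y = {y \<in> block_vecs m N. k \<le> card (all_ones_blocks m N y)}"
  have "0 \<le> (K - 1) * \<Delta>"
    using assms(3,4) by simp
  then have k_gt: "(K - 1) * \<Delta> < real k" and "real k \<le> K * \<Delta>"
    unfolding k_def using assms(3) by (simp_all add: algebra_simps) linarith+
  then have "k * 2 ^ m \<le> N"
    using assms(3-5) by (intro nat_mult_le_if_le_divide[where c = "K * \<Delta>"]) simp_all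
  then have dense: "2 ^ (m * N) \<le> 2 * card Y"
    unfolding Y_def by (rule card_many_all_ones_blocks_ge_half[OF assms(2)])
  have Y: "Y \<subseteq> block_vecs m N"
    unfolding Y_def by blast
  moreover have "Y \<noteq> {}"
    using dense by (cases "Y = {}") simp_all
  moreover have "entropy_deficiency m N Y \<le> \<Delta>"
    using entropy_deficiency_le_1[OF dense] assms(3) by simp
  moreover have "min_entropy_rate_at_least m N Y (1 - 1 / real m)"
    using assms(2) Y dense by (rule min_entropy_rate_at_least_if_half_dense)
  moreover have "(\<lambda>_. False) \<notin> IND_set ({..<N} - I) (index_vecs m N) Y"
    if "I \<subseteq> {..<N}" and "real (card I) \<le> (K - 1) * \<Delta>" for I
    using that k_gt finite_subset[OF that(1)] by (intro all_zero_notin_IND_set[where k = k]) (simp_all add: Y_def)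
  ultimately show ?thesis
    by blast
qed

end
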